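(* The construction $\mathrm{Env}$ is a functor from the category of $k$-coloured operads (with coloured operad morphisms) to the category of operads, and it preserves injections and surjections. Explicitly, the following hold. (i) For every coloured operad morphism $\phi:\mathcal C_1\to\mathcal C_2$, there is a well-defined operad morphism $\mathrm{Env}(\phi):\mathrm{Env}(\mathcal C_1)\to\mathrm{Env}(\mathcal C_2)$ determined by $\mathrm{Env}(\phi)(\mathfrak c(x))=\mathfrak c(\phi(x))$ for $x\in\mathcal C_1^+$. (ii) $\mathrm{Env}(\psi\circ\phi)=\mathrm{Env}(\psi)\circ\mathrm{Env}(\phi)$, and $\mathrm{Env}(\mathrm{id})=\mathrm{id}$. (iii) If $\phi$ is injective (resp. surjective), then $\mathrm{Env}(\phi)$ is injective (resp. surjective).
   Context: All operads are nonsymmetric operads in the category of sets. Fix $k\ge1$ and write $[k]=\{1,\dots,k\}$. A $k$-coloured operad $\mathcal C=\biguplus_{n\ge1}\mathcal C(n)$ assigns to each $x\in\mathcal C(n)$ an output colour $\mathrm{Out}(x)\in[k]$ and input colours $\mathrm{In}_1(x),\dots,\mathrm{In}_n(x)\in[k]$. It has partial compositions $x\circ_i y$, defined exactly when $\mathrm{Out}(y)=\mathrm{In}_i(x)$, satisfying the usual coloured operad axioms. It is assumed that $\mathcal C(1)=\{\mathbf 1_c:c\in[k]\}$ consists of units ($\mathbf 1_c$ has output and input colour $c$) and that each $\mathcal C(n)$ is finite. An operad is a $1$-coloured operad. A coloured operad morphism $\phi:\mathcal C_1\to\mathcal C_2$ between $k$-coloured operads is a map that preserves arities and commutes with the composition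 maps. Moreover, whenever $x\circ_i y$ is defined in $\mathcal C_1$, the composition $\phi(x)\circ_i\phi(y)$ is required to be defined in $\mathcal C_2$. Let $\mathcal C^+=\mathcal C\setminus\mathcal C(1)$. The enveloping operad $\mathrm{Env}(\mathcal C)$ is the quotient of the free uncoloured operad generated by the elements of $\mathcal C^+$ (colours forgotten, $x\in\mathcal C(n)$ being an $n$-ary generator) by the smallest operadic congruence $\equiv$ with $\mathfrak c(x)\circ_i\mathfrak c(y)\equiv\mathfrak c(x\circ_i y)$ whenever $x\circ_i y$ is defined in $\mathcal C$. Here $\mathfrak c(x)$ is the corolla (one-internal-node syntax tree) labelled $x$, and we also write $\mathfrak c(x)$ for its class. *)

theory Defs
  imports Main
begin

text \<open>A k-coloured operad: carrier of elements, arity, output colour, input colours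
  (indexed 1..arity), partial composition comp x i y (= x o_i y, positions 1-indexed)
  and the units (unit c = 1_c for colours c in {1..k}).\<close>

record 'a coperad =
  carrier :: "'a set"
  arity :: "'a \<Rightarrow> nat"
  outc :: "'a \<Rightarrow> nat"
  inc :: "'a \<Rightarrow> nat \<Rightarrow> nat"
  comp :: "'a \<Rightarrow> nat \<Rightarrow> 'a \<Rightarrow> 'a"
  cunit :: "nat \<Rightarrow> 'a"

definition composable :: "'a coperad \<Rightarrow> 'a \<Rightarrow> nat \<Rightarrow> 'a \<Rightarrow> bool" where
  "composable C x i y \<longleftrightarrow> x \<in> carrier C \<and> y \<in> carrier C \<and> 1 \<le> i \<and> i \<le> arity C x
     \<and> outc C y = inc C x i"

definition coloured_operad :: "nat \<Rightarrow> 'a coperad \<Rightarrow> bool" where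
  "coloured_operad k C \<longleftrightarrow>
     (\<forall>x\<in>carrier C. 1 \<le> arity C x \<and> outc C x \<in> {1..k}
                     \<and> (\<forall>i\<in>{1..arity C x}. inc C x i \<in> {1..k}))
   \<and> (\<forall>c\<in>{1..k}. cunit C c \<in> carrier C \<and> arity C (cunit C c) = 1
                   \<and> outc C (cunit C c) = c \<and> inc C (cunit C c) 1 = c)
   \<and> {x\<in>carrier C. arity C x = 1} = cunit C ` {1..k}
   \<and> (\<forall>n. finite {x\<in>carrier C. arity C x = n})
   \<and> (\<forall>x y i. composable C x i y \<longrightarrow>
        comp C x i y \<in> carrier C
      \<and> arity C (comp C x i y) = arity C x + arity C y - 1
      \<and> outc C (comp C x i y) = outc C x
      \<and> (\<forall>j\<in>{1..arity C x + arity C y - 1}.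
           inc C (comp C x i y) j =
             (if j < i then inc C x j
              else if j < i + arity C y then inc C y (j + 1 - i)
              else inc C x (j + 1 - arity C y))))
   \<and> (\<forall>x\<in>carrier C. comp C (cunit C (outc C x)) 1 x = x
                     \<and> (\<forall>i\<in>{1..arity C x}. comp C x i (cunit C (inc C x i)) = x))
   \<and> (\<forall>x y z i j. composable C x i y \<and> composable C y j z \<longrightarrow>
        comp C (comp C x i y) (i + j - 1) z = comp C x i (comp C y j z))
   \<and> (\<forall>x y z i j. composable C x i y \<and> composable C x j z \<and> i < j \<longrightarrow>
        comp C (comp C x i y) (j + arity C y - 1) z = comp C (comp C x j z) i y)"

definition coperad_morphism :: "'a coperad \<Rightarrow> 'b coperad \<Rightarrow> ('a \<Rightarrow> 'b) \<Rightarrow> bool" where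
  "coperad_morphism C1 C2 \<phi> \<longleftrightarrow>
     (\<forall>x\<in>carrier C1. \<phi> x \<in> carrier C2 \<and> arity C2 (\<phi> x) = arity C1 x)
   \<and> (\<forall>x i y. composable C1 x i y \<longrightarrow>
        composable C2 (\<phi> x) i (\<phi> y) \<and> \<phi> (comp C1 x i y) = comp C2 (\<phi> x) i (\<phi> y))"

record 'a operad =
  ocarrier :: "'a set"
  oarity :: "'a \<Rightarrow> nat"
  ocomp :: "'a \<Rightarrow> nat \<Rightarrow> 'a \<Rightarrow> 'a"
  ounit :: "'a"

definition operad_hom :: "'a operad \<Rightarrow> 'b operad \<Rightarrow> ('a \<Rightarrow> 'b) \<Rightarrow> bool" where
  "operad_hom O1 O2 F \<longleftrightarrow>
     (\<forall>X\<in>ocarrier O1. F X \<in> ocarrier O2 \<and> oarity O2 (F X) = oarity O1 X)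
   \<and> F (ounit O1) = ounit O2
   \<and> (\<forall>X\<in>ocarrier O1. \<forall>Y\<in>ocarrier O1. \<forall>i\<in>{1..oarity O1 X}.
        F (ocomp O1 X i Y) = ocomp O2 (F X) i (F Y))"

datatype 'a tree = Leaf | Node 'a "'a tree list"

fun leaves :: "'a tree \<Rightarrow> nat" and leaves_list :: "'a tree list \<Rightarrow> nat" where
  "leaves Leaf = 1"
| "leaves (Node x ts) = leaves_list ts"
| "leaves_list [] = 0"
| "leaves_list (t # ts) = leaves t + leaves_list ts"

text \<open>graft t i s: substitute s into the i-th leaf of t (1-indexed), i.e. t o_i s.\<close>

fun graft :: "'a tree \<Rightarrow> nat \<Rightarrow> 'a tree \<Rightarrow> 'a tree"
  and graft_list :: "'a tree list \<Rightarrow> nat \<Rightarrow> 'a tree \<Rightarrow> 'a tree list" where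
  "graft Leaf i s = (if i = 1 then s else Leaf)"
| "graft (Node x ts) i s = Node x (graft_list ts i s)"
| "graft_list [] i s = []"
| "graft_list (t # ts) i s =
     (if i \<le> leaves t then graft t i s # ts else t # graft_list ts (i - leaves t) s)"

definition corolla :: "'a coperad \<Rightarrow> 'a \<Rightarrow> 'a tree" where
  "corolla C x = Node x (replicate (arity C x) Leaf)"

text \<open>C^+ : the non-unit elements.\<close>
definition cplus :: "'a coperad \<Rightarrow> 'a set" where
  "cplus C = {x\<in>carrier C. arity C x \<noteq> 1}"

text \<open>Elements of the free uncoloured operad on C^+ (colours forgotten).\<close>
inductive ftree :: "'a coperad \<Rightarrow> 'a tree \<Rightarrow> bool" for C where
  ftree_Leaf: "ftree C Leaf"
| ftree_Node: "x \<in> cplus C \<Longrightarrow> length ts = arity C x \<Longrightarrow> \<forall>t\<in>set ts. ftree C t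
     \<Longrightarrow> ftree C (Node x ts)"

text \<open>The smallest operadic congruence generated by c(x) o_i c(y) == c(x o_i y).\<close>
inductive env_rel :: "'a coperad \<Rightarrow> 'a tree \<Rightarrow> 'a tree \<Rightarrow> bool" for C where
  env_gen: "composable C x i y \<Longrightarrow> x \<in> cplus C \<Longrightarrow> y \<in> cplus C \<Longrightarrow>
     env_rel C (graft (corolla C x) i (corolla C y)) (corolla C (comp C x i y))"
| env_refl: "ftree C t \<Longrightarrow> env_rel C t t"
| env_sym: "env_rel C s t \<Longrightarrow> env_rel C t s"
| env_trans: "env_rel C s t \<Longrightarrow> env_rel C t u \<Longrightarrow> env_rel C s u"
| env_cong: "env_rel C s s' \<Longrightarrow> env_rel C t t' \<Longrightarrow> 1 \<le> i \<Longrightarrow> i \<le> leaves s \<Longrightarrow>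
     env_rel C (graft s i t) (graft s' i t')"

definition env_class :: "'a coperad \<Rightarrow> 'a tree \<Rightarrow> 'a tree set" where
  "env_class C t = {t'. env_rel C t t'}"

definition Env :: "'a coperad \<Rightarrow> 'a tree set operad" where
  "Env C = \<lparr> ocarrier = {env_class C t | t. ftree C t},
             oarity = (\<lambda>X. leaves (SOME t. t \<in> X)),
             ocomp = (\<lambda>X i Y. env_class C (graft (SOME t. t \<in> X) i (SOME t. t \<in> Y))),
             ounit = env_class C Leaf \<rparr>"

definition env_map :: "'b coperad \<Rightarrow> ('a \<Rightarrow> 'b) \<Rightarrow> 'a tree set \<Rightarrow> 'b tree set" where
  "env_map C2 \<phi> X = env_class C2 (map_tree \<phi> (SOME t. t \<in> X))"

end

theory Submission
  imports Defs "HOL-Library.Confluence"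
begin

text \<open>
  The congruence defining \<open>Env(C)\<close> is presented by a rewriting system on \<open>C\<^sup>+\<close>-labelled
  trees: contract the edge between a node \<open>x\<close> and its \<open>i\<close>-th child \<open>y\<close> when the colours
  match, replacing both by \<open>x \<circ>\<^sub>i y\<close>. By the sequential and parallel associativity axioms
  two contractions of the same tree can always be completed to a common tree in one step each,
  so the system is confluent and two trees are congruent iff they contract to a common tree.

  A coloured morphism \<open>\<phi>\<close> relabels trees and maps contractions to contractions, so
  \<open>Env(\<phi>)\<close> is well defined; it is unique because corollas generate, and functoriality holds
  on representatives. Surjectivity lifts trees label by label. For injectivity, an injective
  \<open>\<phi>\<close> reflects matching colours, since colours are detected by the units \<open>1\<^sub>c\<close> and \<open>\<phi>\<close> sends
  units to units; hence contractions of \<open>\<phi>(t)\<close> lift to contractions of \<open>t\<close>, and a common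
  reduct of \<open>\<phi>(s)\<close> and \<open>\<phi>(t)\<close> lifts to a common reduct of \<open>s\<close> and \<open>t\<close>.
\<close>

lemma leaves_list_append [simp]: "leaves_list (ts @ us) = leaves_list ts + leaves_list us"
  by (induction ts) auto

lemma leaves_list_replicate_Leaf [simp]: "leaves_list (replicate n Leaf) = n"
  by (induction n) auto

lemma leaves_map_tree [simp]: "leaves (map_tree f t) = leaves t"
  and leaves_list_map_tree [simp]: "leaves_list (map (map_tree f) ts) = leaves_list ts"
  by (induction t and ts rule: leaves_leaves_list.induct) auto

lemma graft_zero: "graft t 0 s = t" "graft_list ts 0 s = ts"
proof -
  have "i = 0 \<Longrightarrow> graft t i s = t" "i = 0 \<Longrightarrow> graft_list ts i s = ts" for i
    by (induction t i s and ts i s rule: graft_graft_list.induct) auto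
  then show "graft t 0 s = t" "graft_list ts 0 s = ts" by blast+
qed

lemma length_graft_list [simp]: "length (graft_list ts i t) = length ts"
  by (induction ts arbitrary: i) auto

lemma graft_list_append:
  "graft_list (ts @ us) i t = (if i \<le> leaves_list ts then graft_list ts i t @ us
      else ts @ graft_list us (i - leaves_list ts) t)"
  by (induction ts arbitrary: i) (auto simp: graft_zero diff_diff_add)

lemma graft_list_append_Cons:
  "1 \<le> i \<Longrightarrow> i \<le> leaves c \<Longrightarrow>
    graft_list (ts @ c # us) (leaves_list ts + i) t = ts @ graft c i t # us"
  by (simp add: graft_list_append)

lemma leaves_graft:
  "1 \<le> i \<Longrightarrow> i \<le> leaves s \<Longrightarrow> leaves (graft s i t) = leaves s + leaves t - 1"
  "1 \<le> i \<Longrightarrow> i \<le> leaves_list ts \<Longrightarrow>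
     leaves_list (graft_list ts i t) = leaves_list ts + leaves t - 1"
  by (induction s i t and ts i t rule: graft_graft_list.induct) auto

lemma leaves_list_split:
  assumes "1 \<le> i" "i \<le> leaves_list ts"
  obtains us c vs j where "ts = us @ c # vs" "i = leaves_list us + j" "1 \<le> j" "j \<le> leaves c"
  using assms
proof (induction ts arbitrary: i thesis)
  case Nil then show ?case by simp
next
  case (Cons a ts)
  show ?case
  proof (cases "i \<le> leaves a")
    case True
    then show ?thesis using Cons.prems by (intro Cons.prems(1)[of "[]"]) auto
  next
    case False
    then have "1 \<le> i - leaves a" "i - leaves a \<le> leaves_list ts" using Cons.prems by auto
    then obtain us c vs j
      where "ts = us @ c # vs" "i - leaves a = leaves_list us + j" "1 \<le> j" "j \<le> leaves c"
      using Cons.IH by blast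
    then show ?thesis using False by (intro Cons.prems(1)[of "a # us" c vs j]) auto
  qed
qed

lemma map_tree_graft:
  "map_tree f (graft s i t) = graft (map_tree f s) i (map_tree f t)"
  "map (map_tree f) (graft_list ts i t) = graft_list (map (map_tree f) ts) i (map_tree f t)"
  by (induction s i t and ts i t rule: graft_graft_list.induct) auto

fun graft_seq :: "'a tree \<Rightarrow> 'a tree list \<Rightarrow> nat \<Rightarrow> 'a tree" where
  "graft_seq a [] p = a"
| "graft_seq a (t # ts) p = graft_seq (graft a p t) ts (p + leaves t)"

lemma graft_seq_append:
  "graft_seq a (ts @ us) p = graft_seq (graft_seq a ts p) us (p + leaves_list ts)"
  by (induction ts arbitrary: a p) (simp_all add: add.assoc)

lemma graft_seq_replicate_Leaf:
  "length ts = m \<Longrightarrow>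
    graft_seq (Node z (L @ replicate m Leaf @ Rr)) ts (Suc (leaves_list L)) = Node z (L @ ts @ Rr)"
proof (induction ts arbitrary: L m)
  case Nil then show ?case by simp
next
  case (Cons t ts)
  then obtain m' where m: "m = Suc m'" "length ts = m'" by auto
  have "graft_list (L @ Leaf # (replicate m' Leaf @ Rr)) (leaves_list L + 1) t
      = L @ t # (replicate m' Leaf @ Rr)"
    using graft_list_append_Cons[of 1 Leaf L] by simp
  then have "graft (Node z (L @ replicate m Leaf @ Rr)) (Suc (leaves_list L)) t
      = Node z ((L @ [t]) @ replicate m' Leaf @ Rr)"
    unfolding m by simp
  then have "graft_seq (Node z (L @ replicate m Leaf @ Rr)) (t # ts) (Suc (leaves_list L))
      = graft_seq (Node z ((L @ [t]) @ replicate m' Leaf @ Rr)) ts (Suc (leaves_list (L @ [t])))"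
    by simp
  also have "\<dots> = Node z ((L @ [t]) @ ts @ Rr)" using Cons.IH m(2) by blast
  finally show ?case by simp
qed

lemma graft_seq_child: "1 \<le> q \<Longrightarrow> q + length ts \<le> leaves c + 1 \<Longrightarrow>
  graft_seq (Node z (L @ c # Rr)) ts (leaves_list L + q) = Node z (L @ graft_seq c ts q # Rr)"
proof (induction ts arbitrary: c q)
  case Nil then show ?case by simp
next
  case (Cons t ts)
  have q: "q \<le> leaves c" using Cons.prems by simp
  have g: "graft (Node z (L @ c # Rr)) (leaves_list L + q) t = Node z (L @ graft c q t # Rr)"
    using graft_list_append_Cons[OF Cons.prems(1) q] by simp
  have lg: "leaves (graft c q t) = leaves c + leaves t - 1"
    using leaves_graft(1)[OF Cons.prems(1) q] .
  have "graft_seq (Node z (L @ c # Rr)) (t # ts) (leaves_list L + q)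
     = graft_seq (Node z (L @ graft c q t # Rr)) ts (leaves_list L + (q + leaves t))"
    using g by (simp add: add.assoc)
  also have "\<dots> = Node z (L @ graft_seq (graft c q t) ts (q + leaves t) # Rr)"
    by (rule Cons.IH) (use Cons.prems lg in auto)
  finally show ?case by simp
qed

lemma leaves_corolla [simp]: "leaves (corolla C x) = arity C x"
  by (simp add: corolla_def)

lemma graft_corolla:
  assumes "1 \<le> i" "i \<le> arity C x"
  shows "graft (corolla C x) i s
    = Node x (replicate (i - 1) Leaf @ s # replicate (arity C x - i) Leaf)"
proof -
  have r: "replicate (arity C x) Leaf
      = replicate (i - 1) Leaf @ Leaf # replicate (arity C x - i) Leaf"
    using assms by (simp flip: replicate_Suc replicate_add)
  show ?thesis
    unfolding corolla_def graft.simps r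
    using graft_list_append_Cons[of 1 Leaf "replicate (i - 1) Leaf" _ s] assms by simp
qed

lemma ftree_Node_iff:
  "ftree C (Node x ts) \<longleftrightarrow> x \<in> cplus C \<and> length ts = arity C x \<and> (\<forall>t\<in>set ts. ftree C t)"
  by (auto elim: ftree.cases intro: ftree.intros)

lemma ftree_graft:
  "ftree C s \<Longrightarrow> ftree C t \<Longrightarrow> ftree C (graft s i t)"
  "\<forall>s\<in>set ss. ftree C s \<Longrightarrow> ftree C t \<Longrightarrow> \<forall>s\<in>set (graft_list ss i t). ftree C s"
  by (induction s i t and ss i t rule: graft_graft_list.induct) (auto simp: ftree_Node_iff)

lemma ftree_corolla: "x \<in> cplus C \<Longrightarrow> ftree C (corolla C x)"
  by (auto simp: corolla_def ftree_Node_iff intro: ftree.intros)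

lemma set_tree_subset_carrier: "ftree C t \<Longrightarrow> set_tree t \<subseteq> carrier C"
  by (induction rule: ftree.induct) (auto simp: cplus_def)

lemma coloured_operad_arity_pos: "coloured_operad k C \<Longrightarrow> x \<in> carrier C \<Longrightarrow> 1 \<le> arity C x"
  unfolding coloured_operad_def by meson

lemma coloured_operad_colours:
  "coloured_operad k C \<Longrightarrow> x \<in> carrier C \<Longrightarrow> outc C x \<in> {1..k}"
  unfolding coloured_operad_def by meson

lemma coloured_operad_cunit:
  assumes "coloured_operad k C" "c \<in> {1..k}"
  shows "cunit C c \<in> carrier C" "arity C (cunit C c) = 1" "outc C (cunit C c) = c"
    "inc C (cunit C c) 1 = c"
  using assms unfolding coloured_operad_def by meson+

lemma coloured_operad_comp:
  assumes "coloured_operad k C" "composable C x i y"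
  shows "comp C x i y \<in> carrier C"
    and "arity C (comp C x i y) = arity C x + arity C y - 1"
    and "outc C (comp C x i y) = outc C x"
    and "j \<in> {1..arity C x + arity C y - 1} \<Longrightarrow> inc C (comp C x i y) j =
           (if j < i then inc C x j
            else if j < i + arity C y then inc C y (j + 1 - i)
            else inc C x (j + 1 - arity C y))"
  using assms unfolding coloured_operad_def by meson+

lemma coloured_operad_assoc:
  "coloured_operad k C \<Longrightarrow> composable C x i y \<Longrightarrow> composable C y j z \<Longrightarrow>
     comp C (comp C x i y) (i + j - 1) z = comp C x i (comp C y j z)"
  unfolding coloured_operad_def by meson

lemma coloured_operad_parallel:
  "coloured_operad k C \<Longrightarrow> composable C x i y \<Longrightarrow> composable C x j z \<Longrightarrow> i < j \<Longrightarrow>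
     comp C (comp C x i y) (j + arity C y - 1) z = comp C (comp C x j z) i y"
  unfolding coloured_operad_def by meson

lemma arity_one_eq_cunit:
  assumes co: "coloured_operad k C" and u: "u \<in> carrier C" "arity C u = 1"
  shows "u = cunit C (outc C u)"
proof -
  have "u \<in> cunit C ` {1..k}"
    using co u unfolding coloured_operad_def by blast
  then show ?thesis using coloured_operad_cunit(3)[OF co] by auto
qed

lemma cplus_arity: "coloured_operad k C \<Longrightarrow> x \<in> cplus C \<Longrightarrow> 2 \<le> arity C x"
  using coloured_operad_arity_pos[of k C x] by (force simp: cplus_def)

lemma comp_in_cplus:
  "coloured_operad k C \<Longrightarrow> composable C x i y \<Longrightarrow> x \<in> cplus C \<Longrightarrow> y \<in> cplus C \<Longrightarrow>
     comp C x i y \<in> cplus C"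
  using coloured_operad_comp(1,2)[of k C x i y] cplus_arity[of k C x] cplus_arity[of k C y]
  by (auto simp: cplus_def)

lemma coperad_morphism_carrier:
  "coperad_morphism C1 C2 \<phi> \<Longrightarrow> x \<in> carrier C1 \<Longrightarrow> \<phi> x \<in> carrier C2"
  "coperad_morphism C1 C2 \<phi> \<Longrightarrow> x \<in> carrier C1 \<Longrightarrow> arity C2 (\<phi> x) = arity C1 x"
  unfolding coperad_morphism_def by blast+

lemma coperad_morphism_comp:
  "coperad_morphism C1 C2 \<phi> \<Longrightarrow> composable C1 x i y \<Longrightarrow> composable C2 (\<phi> x) i (\<phi> y)"
  "coperad_morphism C1 C2 \<phi> \<Longrightarrow> composable C1 x i y \<Longrightarrow> \<phi> (comp C1 x i y) = comp C2 (\<phi> x) i (\<phi> y)"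
  unfolding coperad_morphism_def by blast+

lemma coperad_morphism_compose:
  assumes "coperad_morphism C1 C2 \<phi>" "coperad_morphism C2 C3 \<psi>"
  shows "coperad_morphism C1 C3 (\<psi> \<circ> \<phi>)"
  using assms unfolding coperad_morphism_def by auto

lemma coperad_morphism_cplus: "coperad_morphism C1 C2 \<phi> \<Longrightarrow> x \<in> cplus C1 \<Longrightarrow> \<phi> x \<in> cplus C2"
  by (auto simp: cplus_def coperad_morphism_carrier)

lemma map_tree_corolla:
  "coperad_morphism C1 C2 \<phi> \<Longrightarrow> x \<in> carrier C1 \<Longrightarrow> map_tree \<phi> (corolla C1 x) = corolla C2 (\<phi> x)"
  by (simp add: corolla_def coperad_morphism_carrier)

lemma ftree_map_tree: "ftree C1 t \<Longrightarrow> coperad_morphism C1 C2 \<phi> \<Longrightarrow> ftree C2 (map_tree \<phi> t)"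
proof (induction rule: ftree.induct)
  case (ftree_Node x ts)
  then show ?case
    by (auto simp: ftree_Node_iff coperad_morphism_cplus cplus_def coperad_morphism_carrier)
qed (simp add: ftree.ftree_Leaf)

lemma coperad_morphism_reflects_colour:
  assumes co1: "coloured_operad k C1" and co2: "coloured_operad k C2"
    and m: "coperad_morphism C1 C2 \<phi>" and inj: "inj_on \<phi> (carrier C1)"
    and x: "x \<in> carrier C1" and y: "y \<in> carrier C1" and j: "1 \<le> j" "j \<le> arity C1 x"
    and col: "outc C2 (\<phi> y) = inc C2 (\<phi> x) j"
  shows "outc C1 y = inc C1 x j"
proof -
  define c where "c = outc C1 y"
  define d where "d = inc C1 x j"
  have cd: "c \<in> {1..k}" "d \<in> {1..k}"
    using co1 x y j unfolding c_def d_def coloured_operad_def by auto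
  note uc = coloured_operad_cunit[OF co1 cd(1)] and ud = coloured_operad_cunit[OF co1 cd(2)]
  have units: "\<phi> (cunit C1 e) = cunit C2 (outc C2 (\<phi> (cunit C1 e)))"
    "inc C2 (\<phi> (cunit C1 e)) 1 = outc C2 (\<phi> (cunit C1 e))" if "e \<in> {1..k}" for e
  proof -
    note ue = coloured_operad_cunit[OF co1 that]
    have u: "\<phi> (cunit C1 e) \<in> carrier C2" "arity C2 (\<phi> (cunit C1 e)) = 1"
      using ue coperad_morphism_carrier[OF m] by auto
    show "\<phi> (cunit C1 e) = cunit C2 (outc C2 (\<phi> (cunit C1 e)))"
      using arity_one_eq_cunit[OF co2 u] .
    then show "inc C2 (\<phi> (cunit C1 e)) 1 = outc C2 (\<phi> (cunit C1 e))"
      using coloured_operad_cunit(4)[OF co2 coloured_operad_colours[OF co2 u(1)]] by metis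
  qed
  text \<open>Colours are detected by units: \<open>1\<^sub>c \<circ>\<^sub>1 y\<close> and \<open>x \<circ>\<^sub>j 1\<^sub>d\<close> are defined,
    so \<open>\<phi> 1\<^sub>c\<close> and \<open>\<phi> 1\<^sub>d\<close> are units of the same colour; injectivity gives \<open>c = d\<close>.\<close>
  have "composable C1 (cunit C1 c) 1 y" using uc y by (simp add: composable_def c_def)
  then have a: "outc C2 (\<phi> y) = outc C2 (\<phi> (cunit C1 c))"
    using coperad_morphism_comp(1)[OF m] units(2)[OF cd(1)] unfolding composable_def by metis
  have "composable C1 x j (cunit C1 d)" using ud x j by (simp add: composable_def d_def)
  then have b: "outc C2 (\<phi> (cunit C1 d)) = inc C2 (\<phi> x) j"
    using coperad_morphism_comp(1)[OF m] by (simp add: composable_def)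
  have "\<phi> (cunit C1 c) = \<phi> (cunit C1 d)" using a b col units(1) cd by metis
  then have "cunit C1 c = cunit C1 d" using inj uc ud by (meson inj_onD)
  then show ?thesis using uc(3) ud(3) by (simp add: c_def d_def)
qed

section \<open>Edge contraction\<close>

inductive contract :: "'a coperad \<Rightarrow> 'a tree \<Rightarrow> 'a tree \<Rightarrow> bool" for C where
  contract_root: "outc C y = inc C x (Suc (length A)) \<Longrightarrow>
     contract C (Node x (A @ Node y us # B)) (Node (comp C x (Suc (length A)) y) (A @ us @ B))"
| contract_child: "contract C t t' \<Longrightarrow> contract C (Node x (A @ t # B)) (Node x (A @ t' # B))"

lemma contract_rootI:
  "outc C y = inc C x p \<Longrightarrow> p = Suc (length A) \<Longrightarrow> ts = A @ Node y us # B \<Longrightarrow>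
    r = A @ us @ B \<Longrightarrow> contract C (Node x ts) (Node (comp C x p y) r)"
  using contract_root[of C y x A us B] by simp

lemma contract_childI:
  "contract C t t' \<Longrightarrow> ts = A @ t # B \<Longrightarrow> r = A @ t' # B \<Longrightarrow>
    contract C (Node x ts) (Node x r)"
  using contract_child[of C t t' x A B] by simp

lemma contract_leaves: "contract C s t \<Longrightarrow> leaves s = leaves t"
  by (induction rule: contract.induct) auto

lemma contract_root_composable:
  assumes "ftree C (Node x (A @ Node y us # B))" "outc C y = inc C x (Suc (length A))"
  shows "composable C x (Suc (length A)) y" "x \<in> cplus C" "y \<in> cplus C"
    "length us = arity C y" "arity C x = length A + length B + 1"
  using assms by (auto simp: ftree_Node_iff composable_def cplus_def)

lemma ftree_contract: "contract C s t \<Longrightarrow> coloured_operad k C \<Longrightarrow> ftree C s \<Longrightarrow> ftree C t"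
proof (induction rule: contract.induct)
  case (contract_root y x A us B)
  note rc = contract_root_composable[OF contract_root.prems(2) contract_root.hyps]
  have "comp C x (Suc (length A)) y \<in> cplus C"
    using comp_in_cplus[OF contract_root.prems(1) rc(1-3)] .
  moreover have "arity C (comp C x (Suc (length A)) y) = arity C x + arity C y - 1"
    using coloured_operad_comp[OF contract_root.prems(1) rc(1)] by blast
  ultimately show ?case using contract_root.prems(2) rc by (auto simp: ftree_Node_iff)
next
  case (contract_child t t' x A B)
  then show ?case by (auto simp: ftree_Node_iff)
qed

lemma contract_graft_left: "contract C s s1 \<Longrightarrow> contract C (graft s i u) (graft s1 i u)"
proof (induction arbitrary: i rule: contract.induct)
  case (contract_root y x A us B)
  show ?case
  proof (cases "i \<le> leaves_list A")
    case True
    then show ?thesis using contract_root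
      by (auto simp: graft_list_append intro!: contract_rootI[where A="graft_list A i u"])
  next
    case F1: False
    show ?thesis
    proof (cases "i - leaves_list A \<le> leaves_list us")
      case True
      then show ?thesis using contract_root F1
        by (auto simp: graft_list_append intro!: contract_rootI[where A=A])
    next
      case False
      then show ?thesis using contract_root F1
        by (auto simp: graft_list_append diff_diff_add intro!: contract_rootI[where A=A])
    qed
  qed
next
  case (contract_child t t' x A B)
  have lv: "leaves t = leaves t'" using contract_leaves[OF contract_child.hyps] .
  show ?case
  proof (cases "i \<le> leaves_list A")
    case True
    then show ?thesis using contract_child
      by (auto simp: graft_list_append intro!: contract_childI[where A="graft_list A i u"])
  next
    case F1: False
    show ?thesis
    proof (cases "i - leaves_list A \<le> leaves t")
      case True
      then show ?thesis using contract_child F1 lv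
        by (auto simp: graft_list_append
            intro!: contract_childI[where A=A and t="graft t (i - leaves_list A) u"])
    next
      case False
      then show ?thesis using contract_child F1 lv
        by (auto simp: graft_list_append intro!: contract_childI[where A=A])
    qed
  qed
qed

lemma contract_graft_right:
  "contract C t t1 \<Longrightarrow> 1 \<le> i \<Longrightarrow> i \<le> leaves s \<Longrightarrow> contract C (graft s i t) (graft s i t1)"
proof (induction s arbitrary: i)
  case Leaf
  then show ?case by simp
next
  case (Node x ts)
  obtain A c B i' where d: "ts = A @ c # B" "i = leaves_list A + i'" "1 \<le> i'" "i' \<le> leaves c"
    using leaves_list_split[of i ts] Node.prems by (metis leaves.simps(2))
  have "contract C (graft c i' t) (graft c i' t1)" using Node d by auto
  then show ?case using d by (auto simp: graft_list_append_Cons intro!: contract_childI)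
qed

definition contract_wf :: "'a coperad \<Rightarrow> 'a tree \<Rightarrow> 'a tree \<Rightarrow> bool" where
  "contract_wf C s t \<longleftrightarrow> ftree C s \<and> contract C s t"

lemma ftree_contract_wf: "coloured_operad k C \<Longrightarrow> contract_wf C s t \<Longrightarrow> ftree C t"
  unfolding contract_wf_def using ftree_contract by metis

lemma ftree_contract_wf_rtranclp:
  "(contract_wf C)\<^sup>*\<^sup>* s t \<Longrightarrow> coloured_operad k C \<Longrightarrow> ftree C s \<Longrightarrow> ftree C t"
  by (induction rule: rtranclp_induct) (auto dest: ftree_contract_wf)

lemma leaves_contract_wf_rtranclp: "(contract_wf C)\<^sup>*\<^sup>* s t \<Longrightarrow> leaves s = leaves t"
  by (induction rule: rtranclp_induct) (auto simp: contract_wf_def dest: contract_leaves)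

lemma contract_wf_rtranclp_graft_left:
  "(contract_wf C)\<^sup>*\<^sup>* s s1 \<Longrightarrow> ftree C t \<Longrightarrow>
    (contract_wf C)\<^sup>*\<^sup>* (graft s i t) (graft s1 i t)"
proof (induction rule: rtranclp_induct)
  case (step a b)
  then have "contract_wf C (graft a i t) (graft b i t)"
    by (auto simp: contract_wf_def intro: contract_graft_left ftree_graft(1))
  with step show ?case by (meson rtranclp.rtrancl_into_rtrancl)
qed simp

lemma contract_wf_rtranclp_graft_right:
  "(contract_wf C)\<^sup>*\<^sup>* t t1 \<Longrightarrow> ftree C s \<Longrightarrow> 1 \<le> i \<Longrightarrow> i \<le> leaves s \<Longrightarrow>
    (contract_wf C)\<^sup>*\<^sup>* (graft s i t) (graft s i t1)"
proof (induction rule: rtranclp_induct)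
  case (step a b)
  then have "contract_wf C (graft s i a) (graft s i b)"
    by (auto simp: contract_wf_def intro: contract_graft_right ftree_graft(1))
  with step show ?case by (meson rtranclp.rtrancl_into_rtrancl)
qed simp

lemma append_Cons_eq_append_Cons_cases: "A @ t # B = A' @ t' # B' \<Longrightarrow>
   (A = A' \<and> t = t' \<and> B = B') \<or> (\<exists>M. A' = A @ t # M \<and> B = M @ t' # B')
   \<or> (\<exists>M. A = A' @ t' # M \<and> B' = M @ t # B)"
proof (induction A arbitrary: A')
  case Nil then show ?case by (cases A') auto
next
  case (Cons a A) then show ?case by (cases A') auto
qed

lemma contract_root_parallel_join:
  assumes co: "coloured_operad k C"
    and ft: "ftree C (Node x (A @ Node y us # M @ Node z vs # B))"
    and c1: "outc C y = inc C x (Suc (length A))"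
    and c2: "outc C z = inc C x (Suc (length (A @ Node y us # M)))"
  shows "\<exists>u. contract C (Node (comp C x (Suc (length A)) y) (A @ us @ M @ Node z vs # B)) u
    \<and> contract C (Node (comp C x (Suc (length (A @ Node y us # M))) z) (A @ Node y us # M @ vs @ B))
        u"
proof -
  define p where "p = Suc (length A)"
  define q where "q = Suc (length (A @ Node y us # M))"
  have fx: "x \<in> cplus C" "length (A @ Node y us # M @ Node z vs # B) = arity C x"
    and fy: "y \<in> cplus C" "length us = arity C y"
    and fz: "z \<in> cplus C" "length vs = arity C z"
    using ft by (auto simp: ftree_Node_iff)
  have cpy: "composable C x p y" using fx fy c1 by (auto simp: composable_def cplus_def p_def)
  have cqz: "composable C x q z" using fx fz c2 by (auto simp: composable_def cplus_def q_def)
  have pq: "p < q" by (simp add: p_def q_def)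
  note Cy = coloured_operad_comp[OF co cpy] and Cz = coloured_operad_comp[OF co cqz]
  have ay: "arity C y \<ge> 2" using cplus_arity[OF co fy(1)] .
  have e1: "Suc (length (A @ us @ M)) = q + arity C y - 1" using fy ay by (simp add: q_def)
  have col1: "outc C z = inc C (comp C x p y) (q + arity C y - 1)"
  proof -
    have "q + arity C y - 1 \<in> {1..arity C x + arity C y - 1}"
      using cqz ay by (auto simp: composable_def)
    then have "inc C (comp C x p y) (q + arity C y - 1) = inc C x q"
      using Cy pq ay by auto
    then show ?thesis using c2 q_def by simp
  qed
  have col2: "outc C y = inc C (comp C x q z) p"
  proof -
    have "p \<in> {1..arity C x + arity C z - 1}"
      using cpy cplus_arity[OF co fz(1)] by (auto simp: composable_def)
    then have "inc C (comp C x q z) p = inc C x p" using Cz pq by auto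
    then show ?thesis using c1 p_def by simp
  qed
  have par: "comp C (comp C x p y) (q + arity C y - 1) z = comp C (comp C x q z) p y"
    using coloured_operad_parallel[OF co cpy cqz pq] .
  let ?u = "Node (comp C (comp C x p y) (q + arity C y - 1) z) (A @ us @ M @ vs @ B)"
  have s1: "contract C (Node (comp C x p y) (A @ us @ M @ Node z vs # B)) ?u"
    by (rule contract_rootI[where A="A @ us @ M"]) (use col1 e1 in auto)
  have s2: "contract C (Node (comp C x q z) (A @ Node y us # M @ vs @ B)) ?u"
    unfolding par by (rule contract_rootI[where A="A"]) (use col2 p_def in auto)
  show ?thesis using s1 s2 unfolding p_def q_def by blast
qed

lemma contract_root_nested_join:
  assumes co: "coloured_operad k C"
    and ft: "ftree C (Node x (A @ Node y (U1 @ Node z vs # U2) # B))"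
    and c1: "outc C y = inc C x (Suc (length A))"
    and c2: "outc C z = inc C y (Suc (length U1))"
  shows "\<exists>u. contract C (Node (comp C x (Suc (length A)) y) (A @ (U1 @ Node z vs # U2) @ B)) u
          \<and> contract C (Node x (A @ Node (comp C y (Suc (length U1)) z) (U1 @ vs @ U2) # B)) u"
proof -
  define p where "p = Suc (length A)"
  define r where "r = Suc (length U1)"
  have fx: "x \<in> cplus C" "length (A @ Node y (U1 @ Node z vs # U2) # B) = arity C x"
    and fy: "y \<in> cplus C" "length (U1 @ Node z vs # U2) = arity C y"
    and fz: "z \<in> cplus C" "length vs = arity C z"
    using ft by (auto simp: ftree_Node_iff)
  have cpy: "composable C x p y" using fx fy c1 by (auto simp: composable_def cplus_def p_def)
  have cyz: "composable C y r z" using fy fz c2 by (auto simp: composable_def cplus_def r_def)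
  note Cy = coloured_operad_comp[OF co cpy] and Cz = coloured_operad_comp[OF co cyz]
  have ay: "arity C y \<ge> 2" using cplus_arity[OF co fy(1)] .
  have e1: "Suc (length (A @ U1)) = p + r - 1" by (simp add: p_def r_def)
  have col1: "outc C z = inc C (comp C x p y) (p + r - 1)"
  proof -
    have "p + r - 1 \<in> {1..arity C x + arity C y - 1}" using cpy cyz by (auto simp: composable_def)
    moreover have "p + r - 1 < p + arity C y" "\<not> p + r - 1 < p"
      using cyz by (auto simp: composable_def r_def)
    ultimately have "inc C (comp C x p y) (p + r - 1) = inc C y r"
      using Cy by auto
    then show ?thesis using c2 r_def by simp
  qed
  have col2: "outc C (comp C y r z) = inc C x p" using Cz c1 p_def by simp
  have as: "comp C (comp C x p y) (p + r - 1) z = comp C x p (comp C y r z)"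
    using coloured_operad_assoc[OF co cpy cyz] .
  let ?u = "Node (comp C x p (comp C y r z)) (A @ U1 @ vs @ U2 @ B)"
  have s1: "contract C (Node (comp C x p y) (A @ (U1 @ Node z vs # U2) @ B)) ?u"
    unfolding as[symmetric] by (rule contract_rootI[where A="A @ U1"]) (use col1 e1 in auto)
  have s2: "contract C (Node x (A @ Node (comp C y r z) (U1 @ vs @ U2) # B)) ?u"
    by (rule contract_rootI[where A="A" and us="U1 @ vs @ U2" and B=B]) (use col2 p_def in auto)
  show ?thesis using s1 s2 unfolding p_def r_def by blast
qed

lemma contract_root_join_root:
  assumes co: "coloured_operad k C"
    and ft: "ftree C (Node x (A @ Node y us # B))"
    and c1: "outc C y = inc C x (Suc (length A))"
    and c2: "outc C y' = inc C x (Suc (length A'))"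
    and le: "A @ Node y us # B = A' @ Node y' us' # B'"
  shows "Node (comp C x (Suc (length A)) y) (A @ us @ B)
       = Node (comp C x (Suc (length A')) y') (A' @ us' @ B') \<or>
     (\<exists>u. contract C (Node (comp C x (Suc (length A)) y) (A @ us @ B)) u
        \<and> contract C (Node (comp C x (Suc (length A')) y') (A' @ us' @ B')) u)"
  using append_Cons_eq_append_Cons_cases[OF le]
proof (elim disjE exE conjE)
  fix M assume h: "A' = A @ Node y us # M" "B = M @ Node y' us' # B'"
  show ?thesis
    using contract_root_parallel_join[OF co, of x A y us M y' us' B'] ft c1 c2 h by simp
next
  fix M assume h: "A = A' @ Node y' us' # M" "B' = M @ Node y us # B"
  show ?thesis
    using contract_root_parallel_join[OF co, of x A' y' us' M y us B] ft c1 c2 h by auto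
qed simp

lemma contract_root_join_child:
  assumes co: "coloured_operad k C"
    and ft: "ftree C (Node x (A @ Node y us # B))"
    and c1: "outc C y = inc C x (Suc (length A))"
    and tt: "contract C t t'"
    and le: "A @ Node y us # B = A' @ t # B'"
  shows "\<exists>u. contract C (Node (comp C x (Suc (length A)) y) (A @ us @ B)) u
        \<and> contract C (Node x (A' @ t' # B')) u"
  using append_Cons_eq_append_Cons_cases[OF le]
proof (elim disjE exE conjE)
  assume h: "A = A'" "Node y us = t" "B = B'"
  from tt[folded h(2)] show ?thesis
  proof cases
    case (contract_root z U1 vs U2)
    show ?thesis
      using contract_root_nested_join[OF co, of x A y U1 z vs U2 B] ft c1 contract_root h by simp
  next
    case (contract_child w w' U1 U2)
    let ?u = "Node (comp C x (Suc (length A)) y) (A @ U1 @ w' # U2 @ B)"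
    have "contract C (Node (comp C x (Suc (length A)) y) (A @ us @ B)) ?u"
      by (rule contract_childI[where A="A @ U1" and t=w]) (use contract_child in simp_all)
    moreover have "contract C (Node x (A' @ t' # B')) ?u"
      by (rule contract_rootI[where A=A and us="U1 @ w' # U2" and B=B])
        (use c1 h contract_child in simp_all)
    ultimately show ?thesis by blast
  qed
next
  fix M assume h: "A' = A @ Node y us # M" "B = M @ t # B'"
  let ?u = "Node (comp C x (Suc (length A)) y) (A @ us @ M @ t' # B')"
  have "contract C (Node (comp C x (Suc (length A)) y) (A @ us @ B)) ?u"
    by (rule contract_childI[where A="A @ us @ M" and t=t]) (use tt h in simp_all)
  moreover have "contract C (Node x (A' @ t' # B')) ?u"
    by (rule contract_rootI[where A=A and us=us and B="M @ t' # B'"]) (use c1 h in simp_all)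
  ultimately show ?thesis by blast
next
  fix M assume h: "A = A' @ t # M" "B' = M @ Node y us # B"
  let ?u = "Node (comp C x (Suc (length A)) y) (A' @ t' # M @ us @ B)"
  have "contract C (Node (comp C x (Suc (length A)) y) (A @ us @ B)) ?u"
    by (rule contract_childI[where A="A'" and t=t]) (use tt h in simp_all)
  moreover have "contract C (Node x (A' @ t' # B')) ?u"
    by (rule contract_rootI[where A="A' @ t' # M" and us=us and B=B]) (use c1 h in simp_all)
  ultimately show ?thesis by blast
qed

lemma contract_root_join:
  assumes co: "coloured_operad k C"
    and ft: "ftree C (Node x (A @ Node y us # B))"
    and c1: "outc C y = inc C x (Suc (length A))"
    and st: "contract C (Node x (A @ Node y us # B)) b"
  shows "Node (comp C x (Suc (length A)) y) (A @ us @ B) = b \<or>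
     (\<exists>u. contract C (Node (comp C x (Suc (length A)) y) (A @ us @ B)) u \<and> contract C b u)"
  using st
proof cases
  case (contract_root y' A' us' B')
  then show ?thesis using contract_root_join_root[OF co ft c1] by blast
next
  case (contract_child t t' A' B')
  then show ?thesis using contract_root_join_child[OF co ft c1] by blast
qed

lemma contract_child_join_child:
  assumes IH: "\<And>b. contract C t b \<Longrightarrow> t' = b \<or> (\<exists>u. contract C t' u \<and> contract C b u)"
    and tt: "contract C t t'" and tt2: "contract C t2 t2'"
    and le: "A @ t # B = A' @ t2 # B'"
  shows "Node x (A @ t' # B) = Node x (A' @ t2' # B') \<or>
    (\<exists>u. contract C (Node x (A @ t' # B)) u \<and> contract C (Node x (A' @ t2' # B')) u)"
  using append_Cons_eq_append_Cons_cases[OF le]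
proof (elim disjE exE conjE)
  assume h: "A = A'" "t = t2" "B = B'"
  from IH[OF tt2[folded h(2)]] show ?thesis
  proof
    assume "\<exists>u. contract C t' u \<and> contract C t2' u"
    then obtain u where "contract C t' u" "contract C t2' u" by blast
    then have "contract C (Node x (A @ t' # B)) (Node x (A @ u # B))"
      "contract C (Node x (A' @ t2' # B')) (Node x (A @ u # B))"
      using h by (auto intro: contract.contract_child)
    then show ?thesis by blast
  qed (use h in simp)
next
  fix M assume h: "A' = A @ t # M" "B = M @ t2 # B'"
  have "contract C (Node x (A @ t' # B)) (Node x (A @ t' # M @ t2' # B'))"
    by (rule contract_childI[where A="A @ t' # M" and t=t2]) (use tt2 h in simp_all)
  moreover have "contract C (Node x (A' @ t2' # B')) (Node x (A @ t' # M @ t2' # B'))"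
    by (rule contract_childI[where A=A and t=t]) (use tt h in simp_all)
  ultimately show ?thesis by blast
next
  fix M assume h: "A = A' @ t2 # M" "B' = M @ t # B"
  have "contract C (Node x (A @ t' # B)) (Node x (A' @ t2' # M @ t' # B))"
    by (rule contract_childI[where A=A' and t=t2]) (use tt2 h in simp_all)
  moreover have "contract C (Node x (A' @ t2' # B')) (Node x (A' @ t2' # M @ t' # B))"
    by (rule contract_childI[where A="A' @ t2' # M" and t=t]) (use tt h in simp_all)
  ultimately show ?thesis by blast
qed

lemma contract_diamond:
  "contract C s a \<Longrightarrow> coloured_operad k C \<Longrightarrow> ftree C s \<Longrightarrow> contract C s b \<Longrightarrow>
    a = b \<or> (\<exists>u. contract C a u \<and> contract C b u)"
proof (induction arbitrary: b rule: contract.induct)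
  case (contract_root y x A us B)
  then show ?case using contract_root_join[of k C x A y us B b] by blast
next
  case (contract_child t t' x A B)
  note co = contract_child.prems(1) and ft = contract_child.prems(2)
  from contract_child.prems(3) show ?case
  proof cases
    case (contract_root y' A' us' B')
    have "contract C (Node x (A' @ Node y' us' # B')) (Node x (A @ t' # B))"
      using contract.contract_child[OF contract_child.hyps] contract_root(1) by metis
    then show ?thesis
      using contract_root_join[OF co _ contract_root(3)] ft contract_root(1,2) by metis
  next
    case (contract_child t2 t2' A' B')
    have "ftree C t" using ft by (simp add: ftree_Node_iff)
    then show ?thesis
      using contract_child_join_child[OF _ contract_child.hyps] contract_child co
        contract_child.IH by blast
  qed
qed

lemma strong_confluentp_contract_wf:
  assumes co: "coloured_operad k C"
  shows "strong_confluentp (contract_wf C)"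
proof (rule strong_confluentpI)
  fix x y z assume xy: "contract_wf C x y" and xz: "contract_wf C x z"
  then have "y = z \<or> (\<exists>u. contract C y u \<and> contract C z u)"
    using contract_diamond[of C x y k z] co by (auto simp: contract_wf_def)
  moreover have fy: "ftree C y" "ftree C z" using xy xz co ftree_contract_wf by blast+
  ultimately show "\<exists>u. (contract_wf C)\<^sup>*\<^sup>* y u \<and> (contract_wf C)\<^sup>=\<^sup>= z u"
  proof (elim disjE)
    assume "y = z" then show ?thesis by auto
  next
    assume "\<exists>u. contract C y u \<and> contract C z u"
    then obtain u where "contract C y u" "contract C z u" by blast
    then have "contract_wf C y u" "contract_wf C z u" using fy by (auto simp: contract_wf_def)
    then show ?thesis by (meson r_into_rtranclp sup2CI)
  qed
qed

lemma confluentp_contract_wf: "coloured_operad k C \<Longrightarrow> confluentp (contract_wf C)"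
  by (rule strong_confluentp_imp_confluentp[OF strong_confluentp_contract_wf])

section \<open>The congruence as joinability under contraction\<close>

lemma env_rel_ftree_leaves:
  "env_rel C s t \<Longrightarrow> coloured_operad k C \<Longrightarrow> ftree C s \<and> ftree C t \<and> leaves s = leaves t"
proof (induction rule: env_rel.induct)
  case (env_gen x i y)
  note cc = coloured_operad_comp[OF env_gen.prems env_gen.hyps(1)]
  have "ftree C (corolla C x)" "ftree C (corolla C y)"
    using env_gen.hyps(2,3) by (auto intro: ftree_corolla)
  then have "ftree C (graft (corolla C x) i (corolla C y))"
    by (rule ftree_graft(1))
  moreover have "ftree C (corolla C (comp C x i y))"
    by (rule ftree_corolla[OF comp_in_cplus[OF env_gen.prems env_gen.hyps]])
  moreover have "leaves (graft (corolla C x) i (corolla C y)) = arity C x + arity C y - 1"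
    using env_gen.hyps(1) by (subst leaves_graft(1)) (auto simp: composable_def)
  ultimately show ?case using cc by simp
next
  case (env_cong s s' t t' i)
  have h: "ftree C s" "ftree C s'" "leaves s = leaves s'"
      "ftree C t" "ftree C t'" "leaves t = leaves t'"
    using env_cong.IH env_cong.prems by auto
  have "leaves (graft s i t) = leaves s + leaves t - 1"
    using env_cong.hyps by (simp add: leaves_graft(1))
  moreover have "leaves (graft s' i t') = leaves s' + leaves t' - 1"
    using env_cong.hyps h by (simp add: leaves_graft(1))
  ultimately show ?case using h by (simp add: ftree_graft(1))
next
  case (env_refl t) then show ?case by simp
next
  case (env_sym s t) then show ?case by simp
next
  case (env_trans s t u) then show ?case by simp
qed

lemma contract_wf_generator:
  fixes C :: "'a coperad"
  assumes co: "coloured_operad k C" and cp: "composable C x i y"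
    and xy: "x \<in> cplus C" "y \<in> cplus C"
  shows "contract_wf C (graft (corolla C x) i (corolla C y)) (corolla C (comp C x i y))"
proof -
  have i: "1 \<le> i" "i \<le> arity C x" "outc C y = inc C x i" using cp by (auto simp: composable_def)
  define L R :: "'a tree list"
    where "L = replicate (i - 1) Leaf" and "R = replicate (arity C x - i) Leaf"
  have "arity C (comp C x i y) = (i - 1) + (arity C y + (arity C x - i))"
    using coloured_operad_comp(2)[OF co cp] i by simp
  then have "corolla C (comp C x i y) = Node (comp C x i y) (L @ replicate (arity C y) Leaf @ R)"
    unfolding corolla_def L_def R_def by (simp only: replicate_add)
  moreover have "contract C (Node x (L @ corolla C y # R))
      (Node (comp C x i y) (L @ replicate (arity C y) Leaf @ R))"
    by (rule contract_rootI) (use i in \<open>simp_all add: corolla_def L_def\<close>)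
  ultimately have "contract C (Node x (L @ corolla C y # R)) (corolla C (comp C x i y))"
    by simp
  moreover have "ftree C (graft (corolla C x) i (corolla C y))"
    using ftree_graft(1)[OF ftree_corolla ftree_corolla] xy .
  ultimately show ?thesis
    unfolding contract_wf_def graft_corolla[OF i(1,2)] L_def R_def by blast
qed

lemma env_rel_joinable:
  "env_rel C s t \<Longrightarrow> coloured_operad k C \<Longrightarrow>
     \<exists>u. (contract_wf C)\<^sup>*\<^sup>* s u \<and> (contract_wf C)\<^sup>*\<^sup>* t u"
proof (induction rule: env_rel.induct)
  case (env_gen x i y)
  then show ?case using contract_wf_generator by (metis r_into_rtranclp rtranclp.rtrancl_refl)
next
  case (env_trans s t u)
  then obtain a b where "(contract_wf C)\<^sup>*\<^sup>* s a" "(contract_wf C)\<^sup>*\<^sup>* t a"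
      "(contract_wf C)\<^sup>*\<^sup>* t b" "(contract_wf C)\<^sup>*\<^sup>* u b"
    by blast
  moreover obtain c where "(contract_wf C)\<^sup>*\<^sup>* a c" "(contract_wf C)\<^sup>*\<^sup>* b c"
    using confluentpD[OF confluentp_contract_wf[OF env_trans.prems]] calculation(2,3) by blast
  ultimately show ?case by (meson rtranclp_trans)
next
  case (env_cong s s' t t' i)
  note co = env_cong.prems
  have fs: "ftree C s" "leaves s = leaves s'" and ftt: "ftree C t" "ftree C t'"
    using env_rel_ftree_leaves[OF env_cong.hyps(1) co] env_rel_ftree_leaves[OF env_cong.hyps(2) co]
    by auto
  obtain a where a: "(contract_wf C)\<^sup>*\<^sup>* s a" "(contract_wf C)\<^sup>*\<^sup>* s' a"
    using env_cong.IH(1) co by blast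
  obtain b where b: "(contract_wf C)\<^sup>*\<^sup>* t b" "(contract_wf C)\<^sup>*\<^sup>* t' b"
    using env_cong.IH(2) co by blast
  have fa: "ftree C a" and i: "1 \<le> i" "i \<le> leaves a"
    using ftree_contract_wf_rtranclp[OF a(1) co fs(1)] leaves_contract_wf_rtranclp[OF a(1)]
      env_cong.hyps(3,4) by auto
  have "(contract_wf C)\<^sup>*\<^sup>* (graft r i v) (graft a i b)"
    if "(contract_wf C)\<^sup>*\<^sup>* r a" "(contract_wf C)\<^sup>*\<^sup>* v b" "ftree C v" for r v
    using contract_wf_rtranclp_graft_left[OF that(1,3)]
      contract_wf_rtranclp_graft_right[OF that(2) fa i] by (rule rtranclp_trans)
  then show ?case using a b ftt by blast
qed (blast+)

lemma env_rel_graft_seq: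
  "env_rel C a a' \<Longrightarrow> coloured_operad k C \<Longrightarrow> \<forall>t\<in>set ts. ftree C t \<Longrightarrow>
    1 \<le> p \<Longrightarrow> p + length ts \<le> leaves a + 1 \<Longrightarrow> env_rel C (graft_seq a ts p) (graft_seq a' ts p)"
proof (induction ts arbitrary: a a' p)
  case Nil then show ?case by simp
next
  case (Cons t ts)
  have p: "p \<le> leaves a" using Cons.prems by simp
  have e: "env_rel C (graft a p t) (graft a' p t)"
    by (rule env_cong[OF Cons.prems(1) env_refl Cons.prems(4) p]) (use Cons.prems in simp)
  have lg: "leaves (graft a p t) = leaves a + leaves t - 1"
    using leaves_graft(1)[OF Cons.prems(4) p] .
  show ?case
    using Cons.IH[OF e Cons.prems(2)] Cons.prems lg by simp
qed

lemma env_rel_contract_root: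
  assumes co: "coloured_operad k C"
    and ft: "ftree C (Node x (A @ Node y us # B))"
    and c1: "outc C y = inc C x (Suc (length A))"
  shows "env_rel C (Node x (A @ Node y us # B)) (Node (comp C x (Suc (length A)) y) (A @ us @ B))"
proof -
  define p where "p = Suc (length A)"
  have fx: "x \<in> cplus C" "length A + length B + 1 = arity C x"
    and fy: "y \<in> cplus C" "length us = arity C y"
    and fts: "\<forall>t\<in>set (A @ us @ B). ftree C t"
    using ft by (auto simp: ftree_Node_iff)
  have cp: "composable C x p y" using fx fy c1 by (auto simp: composable_def cplus_def p_def)
  text \<open>Both sides arise by grafting \<open>A @ us @ B\<close> into the leaves of the two sides
    of the generating relation \<open>c(x) \<circ>\<^sub>p c(y) \<equiv> c(x \<circ>\<^sub>p y)\<close>.\<close>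
  have "graft (corolla C x) p (corolla C y)
      = Node x (replicate (length A) Leaf @ corolla C y # replicate (length B) Leaf)"
    using graft_corolla[of p C x] fx by (simp add: p_def)
  then have "graft_seq (graft (corolla C x) p (corolla C y)) A 1
      = Node x (A @ corolla C y # replicate (length B) Leaf)"
    using graft_seq_replicate_Leaf[of A _ x "[]"] by simp
  moreover have "graft_seq (Node x (A @ corolla C y # replicate (length B) Leaf)) us
        (1 + leaves_list A) = Node x (A @ Node y us # replicate (length B) Leaf)"
    using graft_seq_child[of 1 us "corolla C y" x A] graft_seq_replicate_Leaf[of us _ y "[]" "[]"]
      fy
    by (simp add: corolla_def)
  moreover have "graft_seq (Node x (A @ Node y us # replicate (length B) Leaf)) B
        (1 + leaves_list A + leaves_list us) = Node x (A @ Node y us # B)"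
    using graft_seq_replicate_Leaf[of B _ x "A @ [Node y us]" "[]"] by simp
  ultimately have lhs: "graft_seq (graft (corolla C x) p (corolla C y)) (A @ us @ B) 1
      = Node x (A @ Node y us # B)"
    by (simp add: graft_seq_append add.assoc)
  have "arity C (comp C x p y) = length (A @ us @ B)"
    using coloured_operad_comp(2)[OF co cp] fx fy by simp
  then have rhs: "graft_seq (corolla C (comp C x p y)) (A @ us @ B) 1
      = Node (comp C x p y) (A @ us @ B)"
    using graft_seq_replicate_Leaf[of "A @ us @ B" _ "comp C x p y" "[]" "[]"]
    by (simp add: corolla_def)
  have "leaves (graft (corolla C x) p (corolla C y)) = length (A @ us @ B)"
    using leaves_graft(1)[of p "corolla C x"] fx fy by (simp add: p_def)
  then have "env_rel C (graft_seq (graft (corolla C x) p (corolla C y)) (A @ us @ B) 1)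
      (graft_seq (corolla C (comp C x p y)) (A @ us @ B) 1)"
    using env_rel_graft_seq[OF env_gen[OF cp fx(1) fy(1)] co fts] by simp
  then show ?thesis by (simp only: lhs rhs) (simp add: p_def)
qed

lemma env_rel_contract: "contract C s t \<Longrightarrow> coloured_operad k C \<Longrightarrow> ftree C s \<Longrightarrow> env_rel C s t"
proof (induction rule: contract.induct)
  case (contract_root y x A us B)
  then show ?case using env_rel_contract_root[of k C x A y us B] by simp
next
  case (contract_child t t' x A B)
  have ft: "ftree C t" and fN: "ftree C (Node x (A @ Leaf # B))"
    using contract_child.prems(2) by (auto simp: ftree_Node_iff intro: ftree.intros)
  have e: "env_rel C t t'" using contract_child.IH contract_child.prems(1) ft by blast
  have g: "\<And>u. graft (Node x (A @ Leaf # B)) (leaves_list A + 1) u = Node x (A @ u # B)"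
    using graft_list_append_Cons[of 1 Leaf A B] by simp
  have "env_rel C (graft (Node x (A @ Leaf # B)) (leaves_list A + 1) t)
      (graft (Node x (A @ Leaf # B)) (leaves_list A + 1) t')"
    by (rule env_cong[OF env_refl[OF fN] e]) simp_all
  then show ?case unfolding g .
qed

lemma env_rel_contract_wf_rtranclp:
  "(contract_wf C)\<^sup>*\<^sup>* s t \<Longrightarrow> coloured_operad k C \<Longrightarrow> ftree C s \<Longrightarrow> env_rel C s t"
proof (induction rule: rtranclp_induct)
  case base then show ?case by (simp add: env_refl)
next
  case (step a b)
  then have "env_rel C a b" using env_rel_contract by (auto simp: contract_wf_def)
  then show ?case using step env_trans by blast
qed

lemma env_rel_iff_joinable:
  assumes "coloured_operad k C"
  shows "env_rel C s t \<longleftrightarrow>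
    ftree C s \<and> ftree C t \<and> (\<exists>u. (contract_wf C)\<^sup>*\<^sup>* s u \<and> (contract_wf C)\<^sup>*\<^sup>* t u)"
  using env_rel_ftree_leaves[OF _ assms] env_rel_joinable[OF _ assms]
    env_rel_contract_wf_rtranclp[OF _ assms] env_rel.env_sym env_rel.env_trans
  by meson

section \<open>The enveloping operad and \<open>Env(\<phi>)\<close>\<close>

lemma env_rel_map_tree:
  "env_rel C1 s t \<Longrightarrow> coloured_operad k C1 \<Longrightarrow> coperad_morphism C1 C2 \<phi> \<Longrightarrow>
     env_rel C2 (map_tree \<phi> s) (map_tree \<phi> t)"
proof (induction rule: env_rel.induct)
  case (env_gen x i y)
  have xy: "x \<in> carrier C1" "y \<in> carrier C1" "comp C1 x i y \<in> carrier C1"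
    using env_gen coloured_operad_comp(1) by (auto simp: cplus_def)
  have "env_rel C2 (graft (corolla C2 (\<phi> x)) i (corolla C2 (\<phi> y)))
      (corolla C2 (comp C2 (\<phi> x) i (\<phi> y)))"
    using env_gen
      by (intro env_rel.env_gen) (auto simp: coperad_morphism_comp coperad_morphism_cplus)
  then show ?case
    using env_gen xy by (simp add: map_tree_graft map_tree_corolla coperad_morphism_comp)
next
  case (env_refl t) then show ?case using ftree_map_tree env_rel.env_refl by blast
next
  case (env_cong s s' t t' i) then show ?case by (simp add: map_tree_graft env_rel.env_cong)
qed (blast intro: env_rel.env_sym env_rel.env_trans)+

lemma env_class_eq: "env_rel C s t \<Longrightarrow> env_class C s = env_class C t"
  unfolding env_class_def by (blast intro: env_rel.env_trans env_rel.env_sym)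

lemma in_env_class: "ftree C t \<Longrightarrow> t \<in> env_class C t"
  by (simp add: env_class_def env_rel.env_refl)

lemma env_class_eq_iff: "ftree C t \<Longrightarrow> env_class C s = env_class C t \<longleftrightarrow> env_rel C s t"
  using in_env_class env_class_eq unfolding env_class_def by blast

lemma env_rel_some_env_class: "ftree C t \<Longrightarrow> env_rel C t (SOME u. u \<in> env_class C t)"
  using someI[of "\<lambda>u. u \<in> env_class C t", OF in_env_class] by (simp add: env_class_def)

lemma ocarrier_Env_iff: "X \<in> ocarrier (Env C) \<longleftrightarrow> (\<exists>t. ftree C t \<and> X = env_class C t)"
  by (auto simp: Env_def)

lemma ounit_Env: "ounit (Env C) = env_class C Leaf"
  by (simp add: Env_def)

lemma oarity_Env_env_class:
  assumes "coloured_operad k C" "ftree C t"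
  shows "oarity (Env C) (env_class C t) = leaves t"
proof -
  have "leaves (SOME u. u \<in> env_class C t) = leaves t"
    using env_rel_ftree_leaves[OF env_rel_some_env_class[OF assms(2)] assms(1)] by simp
  then show ?thesis by (simp add: Env_def)
qed

lemma ocomp_Env_env_class:
  assumes co: "coloured_operad k C" and fa: "ftree C a" and fb: "ftree C b"
    and i: "1 \<le> i" "i \<le> leaves a"
  shows "ocomp (Env C) (env_class C a) i (env_class C b) = env_class C (graft a i b)"
proof -
  have "i \<le> leaves (SOME u. u \<in> env_class C a)"
    using env_rel_ftree_leaves[OF env_rel_some_env_class[OF fa] co] i by simp
  then have "env_rel C (graft (SOME u. u \<in> env_class C a) i (SOME u. u \<in> env_class C b))
      (graft a i b)"
    using env_rel.env_cong[OF env_rel.env_sym env_rel.env_sym] env_rel_some_env_class fa fb i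
      by blast
  then show ?thesis by (simp add: Env_def env_class_eq)
qed

lemma env_map_env_class:
  assumes "coloured_operad k C1" "coperad_morphism C1 C2 \<phi>" "ftree C1 t"
  shows "env_map C2 \<phi> (env_class C1 t) = env_class C2 (map_tree \<phi> t)"
  using env_rel_map_tree[OF env_rel_some_env_class[OF assms(3)] assms(1,2)]
  by (simp add: env_map_def env_class_eq)

lemma env_map_corolla:
  assumes "coloured_operad k C1" "coperad_morphism C1 C2 \<phi>" "x \<in> cplus C1"
  shows "env_map C2 \<phi> (env_class C1 (corolla C1 x)) = env_class C2 (corolla C2 (\<phi> x))"
  using env_map_env_class[OF assms(1,2) ftree_corolla[OF assms(3)]]
    map_tree_corolla[OF assms(2)] assms(3)
  by (simp add: cplus_def)

lemma operad_hom_env_map: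
  assumes co1: "coloured_operad k C1" and co2: "coloured_operad k C2"
    and m: "coperad_morphism C1 C2 \<phi>"
  shows "operad_hom (Env C1) (Env C2) (env_map C2 \<phi>)"
  unfolding operad_hom_def
proof (intro conjI ballI)
  fix X assume "X \<in> ocarrier (Env C1)"
  then obtain t where t: "ftree C1 t" "X = env_class C1 t" by (auto simp: ocarrier_Env_iff)
  have "ftree C2 (map_tree \<phi> t)" using ftree_map_tree[OF t(1) m] .
  then show "env_map C2 \<phi> X \<in> ocarrier (Env C2)"
    and "oarity (Env C2) (env_map C2 \<phi> X) = oarity (Env C1) X"
    using t env_map_env_class[OF co1 m t(1)] oarity_Env_env_class[OF co1 t(1)]
      oarity_Env_env_class[OF co2] by (auto simp: ocarrier_Env_iff)
next
  show "env_map C2 \<phi> (ounit (Env C1)) = ounit (Env C2)"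
    using env_map_env_class[OF co1 m ftree.ftree_Leaf] by (simp add: ounit_Env)
next
  fix X Y i assume "X \<in> ocarrier (Env C1)" "Y \<in> ocarrier (Env C1)" "i \<in> {1..oarity (Env C1) X}"
  then obtain s t where st: "ftree C1 s" "X = env_class C1 s" "ftree C1 t" "Y = env_class C1 t"
    and i: "1 \<le> i" "i \<le> leaves s"
    using oarity_Env_env_class[OF co1] by (auto simp: ocarrier_Env_iff)
  have fst2: "ftree C2 (map_tree \<phi> s)" "ftree C2 (map_tree \<phi> t)"
    using ftree_map_tree m st by blast+
  have "env_map C2 \<phi> (ocomp (Env C1) X i Y) = env_class C2 (map_tree \<phi> (graft s i t))"
    using ocomp_Env_env_class[OF co1 st(1,3) i] env_map_env_class[OF co1 m ftree_graft(1)] st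
    by simp
  also have "\<dots> = ocomp (Env C2) (env_class C2 (map_tree \<phi> s)) i (env_class C2 (map_tree \<phi> t))"
    using ocomp_Env_env_class[OF co2 fst2 i(1)] i(2) by (simp add: map_tree_graft)
  finally show "env_map C2 \<phi> (ocomp (Env C1) X i Y)
      = ocomp (Env C2) (env_map C2 \<phi> X) i (env_map C2 \<phi> Y)"
    using env_map_env_class[OF co1 m] st by simp
qed

lemma env_map_compose:
  assumes co1: "coloured_operad k C1" and co2: "coloured_operad k C2"
    and m1: "coperad_morphism C1 C2 \<phi>" and m2: "coperad_morphism C2 C3 \<psi>"
    and X: "X \<in> ocarrier (Env C1)"
  shows "env_map C3 (\<psi> \<circ> \<phi>) X = env_map C3 \<psi> (env_map C2 \<phi> X)"
proof -
  obtain t where t: "ftree C1 t" "X = env_class C1 t" using X by (auto simp: ocarrier_Env_iff)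
  have "env_map C3 (\<psi> \<circ> \<phi>) X = env_class C3 (map_tree \<psi> (map_tree \<phi> t))"
    using env_map_env_class[OF co1 coperad_morphism_compose[OF m1 m2] t(1)] t(2)
    by (simp add: tree.map_comp)
  also have "\<dots> = env_map C3 \<psi> (env_map C2 \<phi> X)"
    using env_map_env_class[OF co2 m2 ftree_map_tree[OF t(1) m1]] env_map_env_class[OF co1 m1 t(1)]
      t(2)
    by simp
  finally show ?thesis .
qed

lemma env_map_id: "X \<in> ocarrier (Env C) \<Longrightarrow> env_map C id X = X"
  using env_class_eq[OF env_rel.env_sym[OF env_rel_some_env_class]]
  by (auto simp: ocarrier_Env_iff env_map_def tree.map_id)

lemma operad_hom_Env_graft:
  assumes co1: "coloured_operad k C1" and co2: "coloured_operad k C2"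
    and m: "coperad_morphism C1 C2 \<phi>" and hG: "operad_hom (Env C1) (Env C2) G"
    and fa: "ftree C1 a" and Ga: "G (env_class C1 a) = env_class C2 (map_tree \<phi> a)"
    and ft: "ftree C1 t" and Gt: "G (env_class C1 t) = env_class C2 (map_tree \<phi> t)"
    and p: "1 \<le> p" "p \<le> leaves a"
  shows "G (env_class C1 (graft a p t)) = env_class C2 (map_tree \<phi> (graft a p t))"
proof -
  have in_Env: "env_class C1 a \<in> ocarrier (Env C1)" "env_class C1 t \<in> ocarrier (Env C1)"
    using fa ft by (auto simp: ocarrier_Env_iff)
  have "p \<in> {1..oarity (Env C1) (env_class C1 a)}"
    using oarity_Env_env_class[OF co1 fa] p by simp
  then have "G (ocomp (Env C1) (env_class C1 a) p (env_class C1 t))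
      = ocomp (Env C2) (G (env_class C1 a)) p (G (env_class C1 t))"
    using hG in_Env unfolding operad_hom_def by blast
  then show ?thesis
    using ocomp_Env_env_class[OF co1 fa ft p] ocomp_Env_env_class[OF co2] p
      ftree_map_tree[OF fa m] ftree_map_tree[OF ft m]
    by (simp add: Ga Gt map_tree_graft)
qed

lemma operad_hom_Env_graft_seq:
  assumes co1: "coloured_operad k C1" and co2: "coloured_operad k C2"
    and m: "coperad_morphism C1 C2 \<phi>" and hG: "operad_hom (Env C1) (Env C2) G"
  shows "ftree C1 a \<Longrightarrow> G (env_class C1 a) = env_class C2 (map_tree \<phi> a) \<Longrightarrow>
    \<forall>t\<in>set ts. ftree C1 t \<and> G (env_class C1 t) = env_class C2 (map_tree \<phi> t) \<Longrightarrow>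
    1 \<le> p \<Longrightarrow> p + length ts \<le> leaves a + 1 \<Longrightarrow>
    G (env_class C1 (graft_seq a ts p)) = env_class C2 (map_tree \<phi> (graft_seq a ts p))"
proof (induction ts arbitrary: a p)
  case (Cons t ts)
  have p: "p \<le> leaves a" using Cons.prems by simp
  have "G (env_class C1 (graft a p t)) = env_class C2 (map_tree \<phi> (graft a p t))"
    using operad_hom_Env_graft[OF co1 co2 m hG] Cons.prems p by simp
  moreover have "leaves (graft a p t) = leaves a + leaves t - 1"
    using leaves_graft(1)[OF Cons.prems(4) p] .
  ultimately show ?case
    using Cons.IH[OF ftree_graft(1)] Cons.prems by simp
qed simp

lemma operad_hom_Env_env_class:
  assumes co1: "coloured_operad k C1" and co2: "coloured_operad k C2"
    and m: "coperad_morphism C1 C2 \<phi>" and hG: "operad_hom (Env C1) (Env C2) G"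
    and hc: "\<forall>x\<in>cplus C1. G (env_class C1 (corolla C1 x)) = env_class C2 (corolla C2 (\<phi> x))"
  shows "ftree C1 t \<Longrightarrow> G (env_class C1 t) = env_class C2 (map_tree \<phi> t)"
proof (induction rule: ftree.induct)
  case ftree_Leaf
  then show ?case using hG by (simp add: operad_hom_def ounit_Env)
next
  case (ftree_Node x ts)
  have "G (env_class C1 (corolla C1 x)) = env_class C2 (map_tree \<phi> (corolla C1 x))"
    using hc ftree_Node.hyps(1) map_tree_corolla[OF m] by (simp add: cplus_def)
  then have "G (env_class C1 (graft_seq (corolla C1 x) ts 1))
      = env_class C2 (map_tree \<phi> (graft_seq (corolla C1 x) ts 1))"
    using operad_hom_Env_graft_seq[OF co1 co2 m hG ftree_corolla[OF ftree_Node.hyps(1)]]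
      ftree_Node by simp
  moreover have "graft_seq (corolla C1 x) ts 1 = Node x ts"
    using graft_seq_replicate_Leaf[of ts "arity C1 x" x "[]" "[]"] ftree_Node.hyps(2)
    by (simp add: corolla_def)
  ultimately show ?case by simp
qed

lemma operad_hom_Env_unique:
  assumes "coloured_operad k C1" "coloured_operad k C2" "coperad_morphism C1 C2 \<phi>"
    and "operad_hom (Env C1) (Env C2) G"
    and "\<forall>x\<in>cplus C1. G (env_class C1 (corolla C1 x)) = env_class C2 (corolla C2 (\<phi> x))"
    and "X \<in> ocarrier (Env C1)"
  shows "G X = env_map C2 \<phi> X"
  using assms operad_hom_Env_env_class[OF assms(1-5)] env_map_env_class[OF assms(1,3)]
  by (auto simp: ocarrier_Env_iff)

lemma map_eq_append_ConsE:
  assumes "map f xs = ys @ z # zs"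
  obtains us u vs where "xs = us @ u # vs" "ys = map f us" "z = f u" "zs = map f vs"
  using assms by (auto simp: map_eq_append_conv map_eq_Cons_conv)

lemma contract_map_tree_reflect:
  assumes co1: "coloured_operad k C1" and co2: "coloured_operad k C2"
    and m: "coperad_morphism C1 C2 \<phi>" and inj: "inj_on \<phi> (carrier C1)"
  shows "contract C2 v u \<Longrightarrow> v = map_tree \<phi> s \<Longrightarrow> ftree C1 s \<Longrightarrow>
    \<exists>s'. contract C1 s s' \<and> u = map_tree \<phi> s'"
proof (induction arbitrary: s rule: contract.induct)
  case (contract_root y2 x2 A2 us2 B2)
  obtain x ts where s: "s = Node x ts" "x2 = \<phi> x" "map (map_tree \<phi>) ts = A2 @ Node y2 us2 # B2"
    using contract_root.prems(1) by (cases s) auto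
  then obtain A t0 B where ts0: "ts = A @ t0 # B" and img: "A2 = map (map_tree \<phi>) A"
      "Node y2 us2 = map_tree \<phi> t0" "B2 = map (map_tree \<phi>) B"
    by (elim map_eq_append_ConsE) simp
  then obtain y us where t0: "t0 = Node y us" "y2 = \<phi> y" "us2 = map (map_tree \<phi>) us"
    by (cases t0) auto
  note ts = ts0[unfolded t0(1)]
  have fx: "x \<in> cplus C1" "length A + length B + 1 = arity C1 x" and fy: "y \<in> cplus C1"
    using contract_root.prems(2) s ts by (auto simp: ftree_Node_iff)
  have col: "outc C1 y = inc C1 x (Suc (length A))"
    by (rule coperad_morphism_reflects_colour[OF co1 co2 m inj])
      (use fx fy contract_root.hyps s img t0 in \<open>auto simp: cplus_def\<close>)
  then have "composable C1 x (Suc (length A)) y"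
    using fx fy by (auto simp: composable_def cplus_def)
  then have "Node (comp C2 x2 (Suc (length A2)) y2) (A2 @ us2 @ B2)
      = map_tree \<phi> (Node (comp C1 x (Suc (length A)) y) (A @ us @ B))"
    using coperad_morphism_comp(2)[OF m] s img t0 by simp
  then show ?case using contract.contract_root[OF col] s ts by blast
next
  case (contract_child t2 t2' x2 A2 B2)
  obtain x ts where s: "s = Node x ts" "x2 = \<phi> x" "map (map_tree \<phi>) ts = A2 @ t2 # B2"
    using contract_child.prems(1) by (cases s) auto
  then obtain A t B where ts: "ts = A @ t # B"
    and img: "A2 = map (map_tree \<phi>) A" "t2 = map_tree \<phi> t" "B2 = map (map_tree \<phi>) B"
    by (elim map_eq_append_ConsE) simp
  have "ftree C1 t" using contract_child.prems(2) s ts by (simp add: ftree_Node_iff)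
  then obtain t' where "contract C1 t t'" "t2' = map_tree \<phi> t'"
    using contract_child.IH img(2) by blast
  then show ?case using contract.contract_child s ts img by fastforce
qed

lemma contract_wf_rtranclp_map_tree_reflect:
  assumes co1: "coloured_operad k C1" and co2: "coloured_operad k C2"
    and m: "coperad_morphism C1 C2 \<phi>" and inj: "inj_on \<phi> (carrier C1)"
  shows "(contract_wf C2)\<^sup>*\<^sup>* v u \<Longrightarrow> v = map_tree \<phi> s \<Longrightarrow> ftree C1 s \<Longrightarrow>
    \<exists>s'. (contract_wf C1)\<^sup>*\<^sup>* s s' \<and> u = map_tree \<phi> s'"
proof (induction rule: rtranclp_induct)
  case base then show ?case by blast
next
  case (step a b)
  then obtain s1 where s1: "(contract_wf C1)\<^sup>*\<^sup>* s s1" "a = map_tree \<phi> s1" by blast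
  have f1: "ftree C1 s1" using ftree_contract_wf_rtranclp[OF s1(1) co1 step.prems(2)] .
  have "contract C2 a b" using step.hyps(2) by (simp add: contract_wf_def)
  then obtain s2 where s2: "contract C1 s1 s2" "b = map_tree \<phi> s2"
    using contract_map_tree_reflect[OF co1 co2 m inj _ s1(2) f1] by blast
  have "contract_wf C1 s1 s2" using s2 f1 by (simp add: contract_wf_def)
  then have "(contract_wf C1)\<^sup>*\<^sup>* s s2" by (rule rtranclp.rtrancl_into_rtrancl[OF s1(1)])
  then show ?case using s2(2) by blast
qed

lemma map_tree_inj_on_ftree:
  assumes inj: "inj_on \<phi> (carrier C)" and "ftree C s" "ftree C t"
    and eq: "map_tree \<phi> s = map_tree \<phi> t"
  shows "s = t"
proof (rule tree.inj_map_strong[OF _ eq])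
  fix a b assume "a \<in> set_tree s" "b \<in> set_tree t" "\<phi> a = \<phi> b"
  then show "a = b"
    using set_tree_subset_carrier assms(2,3) inj_onD[OF inj] by blast
qed

lemma inj_on_env_map:
  assumes co1: "coloured_operad k C1" and co2: "coloured_operad k C2"
    and m: "coperad_morphism C1 C2 \<phi>" and inj: "inj_on \<phi> (carrier C1)"
  shows "inj_on (env_map C2 \<phi>) (ocarrier (Env C1))"
proof (rule inj_onI)
  fix X Y assume "X \<in> ocarrier (Env C1)" "Y \<in> ocarrier (Env C1)"
    and eq: "env_map C2 \<phi> X = env_map C2 \<phi> Y"
  then obtain s t where st: "ftree C1 s" "X = env_class C1 s" "ftree C1 t" "Y = env_class C1 t"
    by (auto simp: ocarrier_Env_iff)
  have "env_class C2 (map_tree \<phi> s) = env_class C2 (map_tree \<phi> t)"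
    using eq st env_map_env_class[OF co1 m] by simp
  then have "env_rel C2 (map_tree \<phi> s) (map_tree \<phi> t)"
    using env_class_eq_iff ftree_map_tree[OF st(3) m] by blast
  then obtain u where u: "(contract_wf C2)\<^sup>*\<^sup>* (map_tree \<phi> s) u"
      "(contract_wf C2)\<^sup>*\<^sup>* (map_tree \<phi> t) u"
    using env_rel_iff_joinable[OF co2] by blast
  obtain s' where s': "(contract_wf C1)\<^sup>*\<^sup>* s s'" "u = map_tree \<phi> s'"
    using contract_wf_rtranclp_map_tree_reflect[OF co1 co2 m inj u(1) refl st(1)] by blast
  obtain t' where t': "(contract_wf C1)\<^sup>*\<^sup>* t t'" "u = map_tree \<phi> t'"
    using contract_wf_rtranclp_map_tree_reflect[OF co1 co2 m inj u(2) refl st(3)] by blast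
  have "s' = t'"
    using map_tree_inj_on_ftree[OF inj ftree_contract_wf_rtranclp[OF s'(1) co1 st(1)]
        ftree_contract_wf_rtranclp[OF t'(1) co1 st(3)]] s'(2) t'(2) by simp
  then have "env_rel C1 s t" using env_rel_iff_joinable[OF co1] s'(1) t'(1) st(1,3) by blast
  then show "X = Y" using st env_class_eq by simp
qed

lemma ex_ftree_map_tree_eq:
  assumes m: "coperad_morphism C1 C2 \<phi>" and sur: "\<phi> ` carrier C1 = carrier C2"
  shows "ftree C2 t \<Longrightarrow> \<exists>t1. ftree C1 t1 \<and> map_tree \<phi> t1 = t"
proof (induction rule: ftree.induct)
  case ftree_Leaf then show ?case using ftree.ftree_Leaf by fastforce
next
  case (ftree_Node x ts)
  have "x \<in> \<phi> ` carrier C1" using sur ftree_Node.hyps(1) by (simp add: cplus_def)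
  then obtain x1 where x1: "x1 \<in> carrier C1" "x = \<phi> x1" by (rule imageE)
  then have x1c: "x1 \<in> cplus C1" "arity C1 x1 = arity C2 x"
    using coperad_morphism_carrier[OF m x1(1)] ftree_Node.hyps(1) by (auto simp: cplus_def)
  from ftree_Node.IH obtain g where g: "\<And>t. t \<in> set ts \<Longrightarrow> ftree C1 (g t) \<and> map_tree \<phi> (g t) = t"
    by metis
  have "ftree C1 (Node x1 (map g ts))"
    using g x1c ftree_Node.hyps(2) by (simp add: ftree_Node_iff)
  moreover have "map (map_tree \<phi> \<circ> g) ts = ts"
    by (rule map_idI) (use g in simp)
  ultimately show ?case using x1(2) by (intro exI[of _ "Node x1 (map g ts)"]) simp
qed

lemma env_map_surj:
  assumes co1: "coloured_operad k C1" and co2: "coloured_operad k C2"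
    and m: "coperad_morphism C1 C2 \<phi>" and sur: "\<phi> ` carrier C1 = carrier C2"
  shows "env_map C2 \<phi> ` ocarrier (Env C1) = ocarrier (Env C2)"
proof
  show "env_map C2 \<phi> ` ocarrier (Env C1) \<subseteq> ocarrier (Env C2)"
    using operad_hom_env_map[OF co1 co2 m] unfolding operad_hom_def by blast
  show "ocarrier (Env C2) \<subseteq> env_map C2 \<phi> ` ocarrier (Env C1)"
  proof
    fix Y assume "Y \<in> ocarrier (Env C2)"
    then obtain t where t: "ftree C2 t" "Y = env_class C2 t" by (auto simp: ocarrier_Env_iff)
    obtain t1 where t1: "ftree C1 t1" "map_tree \<phi> t1 = t"
      using ex_ftree_map_tree_eq[OF m sur t(1)] by blast
    then have "Y = env_map C2 \<phi> (env_class C1 t1)" using env_map_env_class[OF co1 m] t by simp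
    moreover have "env_class C1 t1 \<in> ocarrier (Env C1)" using t1 by (auto simp: ocarrier_Env_iff)
    ultimately show "Y \<in> env_map C2 \<phi> ` ocarrier (Env C1)" by blast
  qed
qed

theorem theorem1p2:
  fixes k :: nat
    and C1 :: "'a coperad" and C2 :: "'b coperad" and C3 :: "'c coperad"
    and \<phi> :: "'a \<Rightarrow> 'b" and \<psi> :: "'b \<Rightarrow> 'c"
  assumes "1 \<le> k"
    and "coloured_operad k C1" and "coloured_operad k C2" and "coloured_operad k C3"
    and "coperad_morphism C1 C2 \<phi>" and "coperad_morphism C2 C3 \<psi>"
  shows
    "(\<forall>t. ftree C1 t \<longrightarrow> env_map C2 \<phi> (env_class C1 t) = env_class C2 (map_tree \<phi> t))
     \<and> operad_hom (Env C1) (Env C2) (env_map C2 \<phi>)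
     \<and> (\<forall>x\<in>cplus C1. env_map C2 \<phi> (env_class C1 (corolla C1 x))
                        = env_class C2 (corolla C2 (\<phi> x)))
     \<and> (\<forall>G. operad_hom (Env C1) (Env C2) G
            \<and> (\<forall>x\<in>cplus C1. G (env_class C1 (corolla C1 x)) = env_class C2 (corolla C2 (\<phi> x)))
          \<longrightarrow> (\<forall>X\<in>ocarrier (Env C1). G X = env_map C2 \<phi> X))
     \<and> (\<forall>X\<in>ocarrier (Env C1). env_map C3 (\<psi> \<circ> \<phi>) X = env_map C3 \<psi> (env_map C2 \<phi> X))
     \<and> (\<forall>X\<in>ocarrier (Env C1). env_map C1 id X = X)
     \<and> (inj_on \<phi> (carrier C1) \<longrightarrow> inj_on (env_map C2 \<phi>) (ocarrier (Env C1)))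
     \<and> (\<phi> ` carrier C1 = carrier C2 \<longrightarrow> env_map C2 \<phi> ` ocarrier (Env C1) = ocarrier (Env C2))"
proof (intro conjI allI impI ballI)
  note co1 = assms(2) and co2 = assms(3) and m = assms(5)
  show "env_map C2 \<phi> (env_class C1 t) = env_class C2 (map_tree \<phi> t)" if "ftree C1 t" for t
    using env_map_env_class[OF co1 m that] .
  show "operad_hom (Env C1) (Env C2) (env_map C2 \<phi>)"
    using operad_hom_env_map[OF co1 co2 m] .
  show "env_map C2 \<phi> (env_class C1 (corolla C1 x)) = env_class C2 (corolla C2 (\<phi> x))"
    if "x \<in> cplus C1" for x
    using env_map_corolla[OF co1 m that] .
  show "G X = env_map C2 \<phi> X"
    if "operad_hom (Env C1) (Env C2) G
        \<and> (\<forall>x\<in>cplus C1. G (env_class C1 (corolla C1 x)) = env_class C2 (corolla C2 (\<phi> x)))"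
      and "X \<in> ocarrier (Env C1)" for G X
    using operad_hom_Env_unique[OF co1 co2 m] that by blast
  show "env_map C3 (\<psi> \<circ> \<phi>) X = env_map C3 \<psi> (env_map C2 \<phi> X)" if "X \<in> ocarrier (Env C1)" for X
    using env_map_compose[OF co1 co2 m assms(6) that] .
  show "env_map C1 id X = X" if "X \<in> ocarrier (Env C1)" for X
    using env_map_id[OF that] .
  show "inj_on (env_map C2 \<phi>) (ocarrier (Env C1))" if "inj_on \<phi> (carrier C1)"
    using inj_on_env_map[OF co1 co2 m that] .
  show "env_map C2 \<phi> ` ocarrier (Env C1) = ocarrier (Env C2)" if "\<phi> ` carrier C1 = carrier C2"
    using env_map_surj[OF co1 co2 m that] .
qed

end
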